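(* Let $A$ be an $l\times m$ matrix-valued function ($l\ge m$) with entries in $\mathcal N^\infty$ such that $\mathrm{Rank}A=m$. For $\Phi=[\varphi_1,\cdots,\varphi_r]\in L^2_{M_{m\times r}}$, let $\psi_i$ denote the $i$-th column of $\Psi:=A\Phi$. Then $\mathrm{ind}_{\mathcal N}\{\varphi_1,\cdots,\varphi_r\}=\mathrm{ind}_{\mathcal N}\{\psi_1,\cdots,\psi_r\}$.
   Context: The Nevanlinna class $\mathcal N$ is the set of functions on the unit circle $\mathbb T$ of the form $f/g$ with $f,g\in H^\infty$, $g\neq0$; $\mathcal N^p=\mathcal N\cap L^p$, $\mathcal N_{\mathbb C^k}$ denotes column vectors with entries in $\mathcal N$. $\mathrm{Rank}A:=\operatorname{ess\,sup}_{\zeta\in\mathbb T}\operatorname{rank}A(\zeta)$. Vectors $\varphi_1,\dots,\varphi_r\in L^2_{\mathbb C^k}$ are independent modulo Nevanlinna class if $a_i\in\mathcal N$ and $\sum a_i\varphi_i\in\mathcal N_{\mathbb C^k}$ imply all $a_i=0$; for a finite list of vectors, $\mathrm{ind}_{\mathcal N}$ is the largest size of an independent sub-list ($0$ if none). *)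

theory Defs
  imports "HOL-Analysis.Analysis"
begin

text \<open>Functions on the unit circle T are represented by functions t \<mapsto> f(e^{it}),
  t in [0, 2 pi], with normalised-free Lebesgue measure (null sets are what matter).\<close>

definition circ :: "real measure" where
  "circ = lebesgue_on {0..2*pi}"

definition Hinf :: "(real \<Rightarrow> complex) set" where
  "Hinf = {f. \<exists>F. F holomorphic_on ball 0 1 \<and> bounded (F ` ball 0 1) \<and>
      (AE t in circ. ((\<lambda>r. F (complex_of_real r * cis t)) \<longlongrightarrow> f t) (at_left 1))}"

text \<open>Nevanlinna class: quotients f/g with f, g in H-infinity and g nonzero (as an
  element of L-infinity, i.e. not a.e. zero); equality is a.e.\<close>
definition Nev :: "(real \<Rightarrow> complex) set" where
  "Nev = {h. \<exists>f g. f \<in> Hinf \<and> g \<in> Hinf \<and> \<not> (AE t in circ. g t = 0) \<and>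
                 (AE t in circ. h t = f t / g t)}"

definition Linf :: "(real \<Rightarrow> complex) set" where
  "Linf = {f. f \<in> borel_measurable circ \<and> (\<exists>C. AE t in circ. norm (f t) \<le> C)}"

definition L2 :: "(real \<Rightarrow> complex) set" where
  "L2 = {f. f \<in> borel_measurable circ \<and> integrable circ (\<lambda>t. (norm (f t))\<^sup>2)}"

definition Nev_inf :: "(real \<Rightarrow> complex) set" where
  "Nev_inf = Nev \<inter> Linf"

definition Nev_vec :: "(real \<Rightarrow> complex ^ 'k) set" where
  "Nev_vec = {v. \<forall>i. (\<lambda>t. v t $ i) \<in> Nev}"

definition indep_mod_Nev :: "('r \<Rightarrow> real \<Rightarrow> complex ^ 'k) \<Rightarrow> 'r set \<Rightarrow> bool" where
  "indep_mod_Nev \<phi> S \<longleftrightarrow>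
     (\<forall>a. (\<forall>i\<in>S. a i \<in> Nev) \<longrightarrow>
          (\<lambda>t. \<Sum>i\<in>S. a i t *s \<phi> i t) \<in> Nev_vec \<longrightarrow>
          (\<forall>i\<in>S. AE t in circ. a i t = 0))"

text \<open>ind_N of a finite family: largest size of an independent sub-family
  (the empty sub-family is vacuously independent, giving 0 if none).\<close>
definition ind_Nev :: "('r::finite \<Rightarrow> real \<Rightarrow> complex ^ 'k) \<Rightarrow> nat" where
  "ind_Nev \<phi> = Max (card ` {S. indep_mod_Nev \<phi> S})"

text \<open>Rank A = essential supremum of the pointwise rank.\<close>
definition Rank :: "(real \<Rightarrow> complex ^ 'm ^ 'l) \<Rightarrow> nat" where
  "Rank A = (LEAST n. AE t in circ. rank (A t) \<le> n)"

end

theory Submission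
  imports Defs "HOL-Complex_Analysis.Complex_Analysis"
begin

(* For every sub-family, a combination sum a_i phi_i with coefficients in the Nevanlinna class N
   lies in N exactly when A times it, i.e. sum a_i psi_i, does. One direction is closure of N under
   sums and products. For the other, Rank A = m yields an m x m minor d of A that is not a.e. zero.
   Since a function in H-infinity vanishing on a set of positive measure vanishes a.e. (Jensen's
   inequality on circles approaching the boundary, combined with Fatou's lemma), d is nonzero a.e.,
   so 1/d lies in N and Cramer's rule recovers sum a_i phi_i from sum a_i psi_i inside N. *)

section \<open>Jensen's inequality\<close>

lemma holomorphic_circle_mean:
  fixes h :: "complex \<Rightarrow> complex"
  assumes h: "h holomorphic_on ball 0 R" and r: "0 < r" "r < R"
  shows "((\<lambda>t. h (of_real r * cis t)) has_integral (2 * pi * h 0)) {0..2*pi}"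
proof -
  have "h holomorphic_on cball 0 r"
    by (rule holomorphic_on_subset[OF h]) (use r in \<open>auto simp: subset_iff\<close>)
  from Cauchy_integral_circlepath_simple[OF this, of 0] r
  have "((\<lambda>u. h u / (u - 0)) has_contour_integral (2 * of_real pi * \<i> * h 0)) (circlepath 0 r)"
    by simp
  then have "((\<lambda>t. h (0 + r * cis t) / (0 + r * cis t - 0) * r * \<i> * cis t)
               has_integral (2 * of_real pi * \<i> * h 0)) {0..2*pi}"
    unfolding circlepath_def by (subst (asm) has_contour_integral_part_circlepath_iff) auto
  moreover have "h (0 + r * cis t) / (0 + r * cis t - 0) * r * \<i> * cis t = \<i> * h (of_real r * cis t)" for t
    using r by (simp add: field_simps)
  ultimately have "((\<lambda>t. \<i> * h (of_real r * cis t)) has_integral (\<i> * (2 * pi * h 0))) {0..2*pi}"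
    by (simp add: algebra_simps)
  from has_integral_mult_right[OF this, of "-\<i>"] show ?thesis by simp
qed

lemma ln_norm_circle_mean_zero_free:
  fixes G :: "complex \<Rightarrow> complex"
  assumes G: "G holomorphic_on ball 0 R" and nz: "\<And>z. z \<in> ball 0 R \<Longrightarrow> G z \<noteq> 0"
    and r: "0 < r" "r < R"
  shows "((\<lambda>t. ln (norm (G (of_real r * cis t)))) has_integral (2 * pi * ln (norm (G 0)))) {0..2*pi}"
proof -
  obtain g where g: "g holomorphic_on ball 0 R" "\<And>z. z \<in> ball 0 R \<Longrightarrow> G z = exp (g z)"
    using simply_connected_imp_holomorphic_log[OF G convex_imp_simply_connected[OF convex_ball]
        open_imp_locally_path_connected[OF open_ball] nz] by blast
  have "((\<lambda>t. Re (g (of_real r * cis t))) has_integral Re (2 * pi * g 0)) {0..2*pi}"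
    using has_integral_linear[OF holomorphic_circle_mean[OF g(1) r] bounded_linear_Re]
    by (simp add: o_def)
  moreover have "Re (g (of_real r * cis t)) = ln (norm (G (of_real r * cis t)))" for t
    using g(2)[of "of_real r * cis t"] r by (simp add: norm_mult)
  moreover have "Re (2 * pi * g 0) = 2 * pi * ln (norm (G 0))"
    using g(2)[of 0] r by simp
  ultimately show ?thesis by simp
qed

lemma ln_norm_circle_mean_linear:
  fixes a :: complex
  assumes a: "norm a \<noteq> r" and r: "0 < r"
  shows "((\<lambda>t. ln (norm (of_real r * cis t - a))) has_integral (2 * pi * ln (max (norm a) r))) {0..2*pi}"
proof (cases "norm a > r")
  case True
  have "((\<lambda>t. ln (norm ((\<lambda>z. z - a) (of_real r * cis t)))) has_integral
          (2 * pi * ln (norm ((\<lambda>z. z - a) 0)))) {0..2*pi}"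
    by (rule ln_norm_circle_mean_zero_free[where R="norm a"])
       (use True r in \<open>auto intro!: holomorphic_intros\<close>)
  then show ?thesis using True by simp
next
  case False
  then have lt: "norm a < r" using a by auto
  \<comment> \<open>On the circle |z - a| = |r - cnj a * z / r|, and the right-hand side is zero-free on
    the disc of radius r^2/|a| > r.\<close>
  define G where "G = (\<lambda>z. of_real r - cnj a * z / of_real r)"
  have circle: "norm (G (of_real r * cis t)) = norm (of_real r * cis t - a)" for t
  proof -
    have "cis t * cnj (cis t) = 1"
      by (simp add: cis_cnj cis_mult)
    then have "cis (-t) * G (of_real r * cis t) = cnj (of_real r * cis t - a)"
      unfolding G_def using r by (simp add: algebra_simps cis_mult flip: cis_cnj)
    then show ?thesis by (metis complex_mod_cnj mult_cancel_right1 norm_cis norm_mult)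
  qed
  have "((\<lambda>t. ln (norm (G (of_real r * cis t)))) has_integral (2 * pi * ln (norm (G 0)))) {0..2*pi}"
  proof (cases "a = 0")
    case True
    then show ?thesis unfolding G_def using has_integral_const_real[of "ln r" 0 "2*pi"] r
      by (simp add: norm_mult)
  next
    case False
    show ?thesis
    proof (rule ln_norm_circle_mean_zero_free[where R="r^2 / norm a"])
      show "G holomorphic_on ball 0 (r\<^sup>2 / cmod a)" unfolding G_def by (auto intro!: holomorphic_intros)
      show "G z \<noteq> 0" if "z \<in> ball 0 (r\<^sup>2 / cmod a)" for z
      proof
        assume "G z = 0"
        then have "cnj a * z = of_real r * of_real r" using r unfolding G_def by (simp add: field_simps)
        then have "norm a * norm z = r * r" by (metis complex_mod_cnj norm_mult norm_of_real abs_of_pos r)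
        then show False using that False by (simp add: field_simps power2_eq_square)
      qed
      show "r < r\<^sup>2 / cmod a" using lt False r by (simp add: field_simps power2_eq_square)
    qed (use r in auto)
  qed
  then show ?thesis using lt r unfolding circle by (simp add: G_def)
qed

lemma holomorphic_factor_zero_global:
  fixes F :: "complex \<Rightarrow> complex"
  assumes F: "F holomorphic_on S" and S: "open S" "connected S" and a: "a \<in> S"
    and nz: "\<exists>z\<in>S. F z \<noteq> 0"
  obtains n g where "g holomorphic_on S" "g a \<noteq> 0" "\<And>z. z \<in> S \<Longrightarrow> F z = (z - a) ^ n * g z"
proof (cases "F a = 0")
  case False
  then show ?thesis using F that[of F 0] by auto
next
  case True
  have "\<not> F constant_on S" using nz True a unfolding constant_on_def by metis
  then obtain g0 r n where "0 < n" "0 < r" and g0: "g0 holomorphic_on ball a r"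
    and eq: "\<And>w. w \<in> ball a r \<Longrightarrow> F w = (w - a)^n * g0 w"
    and g0nz: "\<And>w. w \<in> ball a r \<Longrightarrow> g0 w \<noteq> 0"
    using holomorphic_factor_zero_nonconstant[OF F S a True] by metis
  define g where "g = (\<lambda>z. if z = a then g0 a else F z / (z - a) ^ n)"
  have "g holomorphic_on S" unfolding g_def
  proof (rule removable_singularity)
    show "(\<lambda>z. F z / (z - a) ^ n) holomorphic_on S - {a}"
      by (intro holomorphic_intros holomorphic_on_subset[OF F]) auto
    have "isCont g0 a"
      using continuous_on_interior[OF holomorphic_on_imp_continuous_on[OF g0]] \<open>0 < r\<close> by simp
    then have "g0 \<midarrow>a\<rightarrow> g0 a"
      by (simp add: isCont_def)
    moreover have "\<forall>\<^sub>F z in at a. g0 z = F z / (z - a) ^ n"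
      unfolding eventually_at using \<open>0 < r\<close> eq by (auto simp: dist_commute)
    ultimately show "(\<lambda>z. F z / (z - a) ^ n) \<midarrow>a\<rightarrow> g0 a"
      using tendsto_cong by fastforce
  qed fact
  moreover have "g a \<noteq> 0" using g0nz[of a] \<open>0 < r\<close> unfolding g_def by simp
  moreover have "F z = (z - a) ^ n * g z" for z
    using True \<open>0 < n\<close> unfolding g_def by auto
  ultimately show ?thesis using that by blast
qed

lemma finite_zeros_in_cball:
  fixes F :: "complex \<Rightarrow> complex"
  assumes F: "F holomorphic_on ball 0 R" and F0: "F 0 \<noteq> 0" and r: "r < R"
  shows "finite {z \<in> cball 0 r. F z = 0}"
proof (cases "F constant_on ball 0 R")
  case True
  then obtain c where c: "\<And>z. z \<in> ball 0 R \<Longrightarrow> F z = c"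
    unfolding constant_on_def by blast
  have "F z \<noteq> 0" if "z \<in> cball 0 r" for z
  proof -
    have "norm z \<le> r" using that by simp
    then have "0 < R" using r norm_ge_zero[of z] by linarith
    then have "z \<in> ball 0 R" "0 \<in> ball (0::complex) R" using \<open>norm z \<le> r\<close> r by auto
    then show ?thesis using c F0 by metis
  qed
  then have "{z \<in> cball 0 r. F z = 0} = {}" by blast
  then show ?thesis by (metis finite.emptyI)
next
  case False
  have "cball 0 r \<subseteq> ball (0::complex) R" using r by auto
  then show ?thesis
    by (rule holomorphic_compact_finite_zeros[OF F open_ball connected_ball compact_cball _ False])
qed

definition ln_norm_sub_mean :: "(complex \<Rightarrow> complex) \<Rightarrow> real \<Rightarrow> bool" where
  "ln_norm_sub_mean F r \<longleftrightarrow>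
     (\<exists>v. ((\<lambda>t. ln (norm (F (of_real r * cis t)))) has_integral v) {0..2*pi} \<and>
          2 * pi * ln (norm (F 0)) \<le> v)"

lemma ln_norm_sub_mean_zero_free:
  fixes G :: "complex \<Rightarrow> complex"
  assumes "G holomorphic_on ball 0 R" "\<And>z. z \<in> ball 0 R \<Longrightarrow> G z \<noteq> 0" "0 < r" "r < R"
  shows "ln_norm_sub_mean G r"
  using ln_norm_circle_mean_zero_free[OF assms] unfolding ln_norm_sub_mean_def by blast

lemma ln_norm_sub_mean_mult_linear_power:
  fixes g :: "complex \<Rightarrow> complex"
  assumes g: "ln_norm_sub_mean g r" "g 0 \<noteq> 0" "\<And>z. norm z = r \<Longrightarrow> g z \<noteq> 0"
    and a: "a \<noteq> 0" "norm a \<noteq> r" and r: "0 < r"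
  shows "ln_norm_sub_mean (\<lambda>z. (z - a) ^ m * g z) r"
proof -
  obtain v where v: "((\<lambda>t. ln (norm (g (of_real r * cis t)))) has_integral v) {0..2*pi}"
    "2 * pi * ln (norm (g 0)) \<le> v"
    using g(1) unfolding ln_norm_sub_mean_def by blast
  have ln_mult: "ln (norm ((z - a) ^ m * g z)) = m * ln (norm (z - a)) + ln (norm (g z))"
    if "z \<noteq> a" "g z \<noteq> 0" for z
    using that by (simp add: norm_mult norm_power ln_mult ln_realpow)
  have "norm (of_real r * cis t) = r" for t
    using r by (simp add: norm_mult)
  then have ln_circle: "ln (norm ((of_real r * cis t - a) ^ m * g (of_real r * cis t))) =
      m * ln (norm (of_real r * cis t - a)) + ln (norm (g (of_real r * cis t)))" for t
    using a(2) g(3) by (intro ln_mult) auto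
  have "((\<lambda>t. ln (norm ((of_real r * cis t - a) ^ m * g (of_real r * cis t)))) has_integral
              (m * (2 * pi * ln (max (norm a) r)) + v)) {0..2*pi}"
    unfolding ln_circle
    by (rule has_integral_add[OF has_integral_mult_right[OF ln_norm_circle_mean_linear[OF a(2) r]] v(1)])
  moreover have "2 * pi * ln (norm ((0 - a) ^ m * g 0)) \<le> m * (2 * pi * ln (max (norm a) r)) + v"
  proof -
    have "ln (norm a) \<le> ln (max (norm a) r)"
      using a(1) r by (subst ln_le_cancel_iff) auto
    then have "m * (2 * pi * ln (norm a)) \<le> m * (2 * pi * ln (max (norm a) r))"
      by (intro mult_left_mono) auto
    moreover have "2 * pi * ln (norm ((0 - a) ^ m * g 0)) = m * (2 * pi * ln (norm a)) + 2 * pi * ln (norm (g 0))"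
      using ln_mult[of 0] a(1) g(2) by (simp add: algebra_simps)
    ultimately show ?thesis
      using v(2) by linarith
  qed
  ultimately show ?thesis
    unfolding ln_norm_sub_mean_def by blast
qed

text \<open>The zeros inside a slightly larger closed disc are divided out one at a time; each
  contributes the circle mean of ln |z - a|, which dominates its value ln |a| at 0.\<close>

lemma ln_norm_sub_mean:
  fixes F :: "complex \<Rightarrow> complex"
  assumes F: "F holomorphic_on ball 0 R" and F0: "F 0 \<noteq> 0" and r: "0 < r" "r < R"
    and circle: "\<And>z. norm z = r \<Longrightarrow> F z \<noteq> 0"
  shows "ln_norm_sub_mean F r"
proof -
  define R' where "R' = (r + R) / 2"
  have R': "r < R'" "R' < R" "cball 0 R' \<subseteq> ball (0::complex) R" using r by (auto simp: R'_def)
  define Z where "Z = (\<lambda>G :: complex \<Rightarrow> complex. {z \<in> cball 0 R'. G z = 0})"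
  have "finite (Z F)"
    unfolding Z_def using finite_zeros_in_cball[OF F F0 R'(2)] .
  then show ?thesis
    using F F0 circle
  proof (induction "card (Z F)" arbitrary: F)
    case 0
    have "F holomorphic_on ball 0 R'"
      using "0.prems"(2) R'(3) ball_subset_cball by (blast intro: holomorphic_on_subset)
    moreover have "F z \<noteq> 0" if "z \<in> ball 0 R'" for z
      using that "0.hyps" "0.prems"(1) by (auto simp: Z_def)
    ultimately show ?case
      using ln_norm_sub_mean_zero_free r(1) R'(1) by blast
  next
    case (Suc n F)
    then obtain a where "a \<in> Z F" by fastforce
    then have a: "a \<in> ball 0 R" "F a = 0" using R'(3) by (auto simp: Z_def)
    moreover have "\<exists>z\<in>ball 0 R. F z \<noteq> 0" using Suc.prems(3) r by force
    ultimately obtain m g where g: "g holomorphic_on ball 0 R" "g a \<noteq> 0"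
      and Fg: "\<And>z. z \<in> ball 0 R \<Longrightarrow> F z = (z - a) ^ m * g z"
      using holomorphic_factor_zero_global[OF Suc.prems(2) open_ball connected_ball] by metis
    have "0 < m" using Fg[OF a(1)] a(2) g(2) by (cases m) auto
    have "Z g = Z F - {a}"
      using g(2) Fg R'(3) \<open>0 < m\<close> by (auto simp: Z_def subset_iff)
    then have "n = card (Z g)" "finite (Z g)" using Suc.hyps(2) Suc.prems(1) \<open>a \<in> Z F\<close> by auto
    moreover have "g 0 \<noteq> 0" using Fg[of 0] Suc.prems(3) r by auto
    moreover have g_circle: "g z \<noteq> 0" if "norm z = r" for z
      using Fg[of z] Suc.prems(4)[OF that] that r by auto
    ultimately have "ln_norm_sub_mean g r"
      using Suc.hyps(1) g(1) by blast
    moreover have "a \<noteq> 0" "norm a \<noteq> r" using Suc.prems(3,4) a(2) by auto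
    ultimately have "ln_norm_sub_mean (\<lambda>z. (z - a) ^ m * g z) r"
      using ln_norm_sub_mean_mult_linear_power \<open>g 0 \<noteq> 0\<close> g_circle r by blast
    moreover have "F (of_real r * cis t) = (of_real r * cis t - a) ^ m * g (of_real r * cis t)" for t
      by (rule Fg) (use r in \<open>simp add: norm_mult\<close>)
    moreover have "F 0 = (0 - a) ^ m * g 0"
      by (rule Fg) (use r in simp)
    ultimately show ?case
      unfolding ln_norm_sub_mean_def by simp
  qed
qed

lemma exists_zero_free_circle:
  fixes F :: "complex \<Rightarrow> complex"
  assumes F: "F holomorphic_on ball 0 1" and F0: "F 0 \<noteq> 0" and lo: "0 \<le> lo" "lo < 1"
  obtains r where "lo < r" "r < 1" "\<And>z. norm z = r \<Longrightarrow> F z \<noteq> 0"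
proof -
  define hi where "hi = (lo + 1) / 2"
  have hi: "lo < hi" "hi < 1" using lo unfolding hi_def by auto
  define Z where "Z = {z \<in> cball 0 hi. F z = 0}"
  have "infinite ({lo<..<hi} - norm ` Z)"
    using hi finite_zeros_in_cball[OF F F0 hi(2)] unfolding Z_def by (intro Diff_infinite_finite) auto
  then obtain r where r: "r \<in> {lo<..<hi}" "r \<notin> norm ` Z"
    by (metis all_not_in_conv finite.emptyI Diff_iff)
  have "F z \<noteq> 0" if "norm z = r" for z
  proof
    assume "F z = 0"
    then have "z \<in> Z" using that r(1) by (simp add: Z_def)
    then show False using that r(2) by blast
  qed
  then show ?thesis using that r(1) hi by auto
qed

section \<open>Boundary values of bounded holomorphic functions\<close>

lemma AE_liminf_finite_if_nn_integral_bounded: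
  fixes u :: "nat \<Rightarrow> 'a \<Rightarrow> ennreal"
  assumes u: "\<And>n. u n \<in> borel_measurable M" and bound: "\<And>n. (\<integral>\<^sup>+ x. u n x \<partial>M) \<le> C"
    and C: "C \<noteq> \<infinity>"
  shows "AE x in M. liminf (\<lambda>n. u n x) \<noteq> \<infinity>"
proof (rule nn_integral_noteq_infinite)
  show "(\<lambda>x. liminf (\<lambda>n. u n x)) \<in> borel_measurable M"
    using u by measurable
  have "(\<integral>\<^sup>+ x. liminf (\<lambda>n. u n x) \<partial>M) \<le> liminf (\<lambda>n. \<integral>\<^sup>+ x. u n x \<partial>M)"
    by (rule nn_integral_liminf[OF u])
  also have "\<dots> \<le> C"
    using bound by (intro Liminf_le always_eventually) auto
  finally show "(\<integral>\<^sup>+ x. liminf (\<lambda>n. u n x) \<partial>M) \<noteq> \<infinity>"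
    using C by (auto simp: top_unique)
qed

lemma zero_free_circles_to_boundary:
  fixes F :: "complex \<Rightarrow> complex"
  assumes F: "F holomorphic_on ball 0 1" and F0: "F 0 \<noteq> 0"
  obtains \<rho> where "\<And>n. 0 < \<rho> n" "\<And>n. \<rho> n < 1" "\<And>n z. norm z = \<rho> n \<Longrightarrow> F z \<noteq> 0"
    "filterlim \<rho> (at_left 1) sequentially"
proof -
  define lo where "lo = (\<lambda>n. 1 + - inverse (real (Suc n)))"
  have "0 \<le> lo n" "lo n < 1" for n
    by (auto simp: lo_def field_simps)
  then have "\<forall>n. \<exists>r. lo n < r \<and> r < 1 \<and> (\<forall>z. norm z = r \<longrightarrow> F z \<noteq> 0)"
    by (metis exists_zero_free_circle[OF F F0])
  then obtain \<rho> where \<rho>: "\<And>n. lo n < \<rho> n" "\<And>n. \<rho> n < 1" "\<And>n z. norm z = \<rho> n \<Longrightarrow> F z \<noteq> 0"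
    by metis
  have "\<rho> \<longlonglongrightarrow> 1"
  proof (rule tendsto_sandwich[of lo _ _ "\<lambda>n. 1"])
    show "lo \<longlonglongrightarrow> 1"
      unfolding lo_def by (rule LIMSEQ_inverse_real_of_nat_add_minus)
  qed (auto intro!: always_eventually less_imp_le simp: \<rho>)
  then have "filterlim \<rho> (at_left 1) sequentially"
    using \<rho>(2) by (auto simp: filterlim_at less_imp_neq intro!: always_eventually)
  moreover have "0 < \<rho> n" for n
    using \<rho>(1) \<open>\<And>n. 0 \<le> lo n\<close> by (meson le_less_trans)
  ultimately show ?thesis using that \<rho> by blast
qed

lemma continuous_on_ln_norm_circle:
  fixes F :: "complex \<Rightarrow> complex"
  assumes F: "F holomorphic_on ball 0 1" and r: "0 < r" "r < 1"
    and circle: "\<And>z. norm z = r \<Longrightarrow> F z \<noteq> 0"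
  shows "continuous_on S (\<lambda>t. ln (norm (F (of_real r * cis t))))"
proof -
  have "norm (of_real r * cis t :: complex) = r" for t
    using r by (simp add: norm_mult)
  then have "continuous_on S (\<lambda>t. F (of_real r * cis t))"
    using r by (intro continuous_on_compose2[OF holomorphic_on_imp_continuous_on[OF F]] continuous_intros)
      auto
  then show ?thesis
    using circle \<open>\<And>t. norm (of_real r * cis t :: complex) = r\<close> by (intro continuous_intros) auto
qed

lemma nn_integral_ln_gap_circle_le:
  fixes F :: "complex \<Rightarrow> complex"
  assumes F: "F holomorphic_on ball 0 1" and F0: "F 0 \<noteq> 0" and r: "0 < r" "r < 1"
    and circle: "\<And>z. norm z = r \<Longrightarrow> F z \<noteq> 0" and B: "\<And>t. norm (F (of_real r * cis t)) < B"
  shows "(\<integral>\<^sup>+ t. ennreal (ln B - ln (norm (F (of_real r * cis t)))) \<partial>lebesgue_on {0..2*pi})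
           \<le> ennreal (2 * pi * ln B - 2 * pi * ln (norm (F 0)))"
proof -
  define h where "h = (\<lambda>t. ln B - ln (norm (F (of_real r * cis t))))"
  have "0 \<le> h t" for t
  proof -
    have "0 < norm (F (of_real r * cis t))"
      using circle[of "of_real r * cis t"] r by (simp add: norm_mult)
    moreover have "0 < B"
      using B[of t] \<open>0 < norm (F (of_real r * cis t))\<close> by linarith
    ultimately have "ln (norm (F (of_real r * cis t))) \<le> ln B"
      using B[of t] by (subst ln_le_cancel_iff) auto
    then show ?thesis by (simp add: h_def)
  qed
  obtain v where v: "((\<lambda>t. ln (norm (F (of_real r * cis t)))) has_integral v) {0..2*pi}"
    "2 * pi * ln (norm (F 0)) \<le> v"
    using ln_norm_sub_mean[OF F F0 r circle] unfolding ln_norm_sub_mean_def by blast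
  have "(h has_integral (2 * pi * ln B - v)) {0..2*pi}"
    unfolding h_def using has_integral_diff[OF has_integral_const_real[of "ln B" 0 "2*pi"] v(1)]
    by simp
  moreover have int: "integrable (lebesgue_on {0..2*pi}) h"
    unfolding h_def
    by (intro continuous_imp_integrable_real continuous_intros continuous_on_ln_norm_circle[OF F r circle])
  then have "(h has_integral integral\<^sup>L (lebesgue_on {0..2*pi}) h) {0..2*pi}"
    by (rule has_integral_integral_lebesgue_on) simp
  ultimately have "integral\<^sup>L (lebesgue_on {0..2*pi}) h = 2 * pi * ln B - v"
    by (rule has_integral_unique[rotated])
  then have "(\<integral>\<^sup>+ t. ennreal (h t) \<partial>lebesgue_on {0..2*pi}) = ennreal (2 * pi * ln B - v)"
    using nn_integral_eq_integral[OF int AE_I2[OF \<open>\<And>t. 0 \<le> h t\<close>]] by simp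
  then show ?thesis
    using v(2) by (simp add: h_def ennreal_leI)
qed

text \<open>If the radial limit vanished on a set of positive measure, then along a sequence of circles
  avoiding the zeros of F, the nonnegative functions ln M' - ln |F| would tend to infinity there
  while, by Jensen's inequality, their integrals stay bounded; Fatou's lemma rules this out.\<close>

lemma radial_limit_nonzero_AE_if_nonzero_at_0:
  fixes F :: "complex \<Rightarrow> complex"
  assumes F: "F holomorphic_on ball 0 1" and bd: "\<And>z. z \<in> ball 0 1 \<Longrightarrow> norm (F z) \<le> M"
    and F0: "F 0 \<noteq> 0"
  shows "AE t in lebesgue_on {0..2*pi}. \<not> ((\<lambda>r. F (of_real r * cis t)) \<longlongrightarrow> 0) (at_left 1)"
proof -
  obtain \<rho> where \<rho>: "\<And>n. 0 < \<rho> n" "\<And>n. \<rho> n < 1" "\<And>n z. norm z = \<rho> n \<Longrightarrow> F z \<noteq> 0"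
    and \<rho>_lim: "filterlim \<rho> (at_left 1) sequentially"
    using zero_free_circles_to_boundary[OF F F0] by blast
  define z where "z = (\<lambda>n t. of_real (\<rho> n) * cis t :: complex)"
  have z: "z n t \<in> ball 0 1" "F (z n t) \<noteq> 0" for n t
    using \<rho>(1,2)[of n] \<rho>(3)[of "z n t" n] by (auto simp: z_def norm_mult)
  define h where "h = (\<lambda>n t. ln (M + 1) - ln (norm (F (z n t))))"
  have below: "norm (F (z n t)) < M + 1" for n t
    using bd[OF z(1)[of n t]] by linarith
  have "(\<integral>\<^sup>+ t. ennreal (h n t) \<partial>lebesgue_on {0..2*pi})
      \<le> ennreal (2 * pi * ln (M + 1) - 2 * pi * ln (norm (F 0)))" for n
    using nn_integral_ln_gap_circle_le[OF F F0 \<rho>(1,2)[of n] \<rho>(3)[of _ n] below[of n, unfolded z_def]]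
    unfolding h_def z_def .
  moreover have "(\<lambda>t. ennreal (h n t)) \<in> borel_measurable (lebesgue_on {0..2*pi})" for n
    unfolding h_def z_def
    by (intro measurable_compose[OF _ measurable_ennreal] continuous_imp_measurable_on_sets_lebesgue
        continuous_intros continuous_on_ln_norm_circle[OF F \<rho>(1,2) \<rho>(3)]) auto
  ultimately have "AE t in lebesgue_on {0..2*pi}. liminf (\<lambda>n. ennreal (h n t)) \<noteq> \<infinity>"
    by (intro AE_liminf_finite_if_nn_integral_bounded) auto
  then show ?thesis
  proof (rule eventually_mono, intro notI)
    fix t
    assume fin: "liminf (\<lambda>n. ennreal (h n t)) \<noteq> \<infinity>"
      and radial: "((\<lambda>r. F (of_real r * cis t)) \<longlongrightarrow> 0) (at_left 1)"
    have "(\<lambda>n. F (z n t)) \<longlonglongrightarrow> 0"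
      unfolding z_def by (rule filterlim_compose[OF radial \<rho>_lim])
    then have "filterlim (\<lambda>n. norm (F (z n t))) (at_right 0) sequentially"
      using z(2) by (auto simp: filterlim_at tendsto_norm_zero intro: always_eventually)
    then have "filterlim (\<lambda>n. ln (norm (F (z n t)))) at_bot sequentially"
      by (rule filterlim_compose[OF ln_at_0])
    then have "filterlim (\<lambda>n. - ln (norm (F (z n t)))) at_top sequentially"
      by (simp add: filterlim_uminus_at_bot)
    then have "filterlim (\<lambda>n. ln (M + 1) + - ln (norm (F (z n t)))) at_top sequentially"
      by (rule filterlim_tendsto_add_at_top[OF tendsto_const])
    then have "filterlim (\<lambda>n. h n t) at_top sequentially"
      by (simp add: h_def)
    then have "liminf (\<lambda>n. ennreal (h n t)) = \<infinity>"
      by (intro lim_imp_Liminf) (auto simp: ennreal_tendsto_top_eq_at_top)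
    then show False using fin by simp
  qed
qed

lemma bounded_if_power_mult_bounded:
  fixes g :: "complex \<Rightarrow> complex"
  assumes g: "g holomorphic_on ball 0 1" and bd: "\<And>z. z \<in> ball 0 1 \<Longrightarrow> norm (z ^ n * g z) \<le> M"
  obtains M' where "\<And>z. z \<in> ball 0 1 \<Longrightarrow> norm (g z) \<le> M'"
proof -
  have "compact (g ` cball 0 (1/2))"
    by (rule compact_continuous_image[OF holomorphic_on_imp_continuous_on[OF holomorphic_on_subset[OF g]]])
       auto
  then obtain M1 where M1: "\<And>z. z \<in> cball 0 (1/2) \<Longrightarrow> norm (g z) \<le> M1"
    by (meson bounded_iff compact_imp_bounded image_eqI)
  have "norm (g z) \<le> max M1 (M * 2 ^ n)" if z: "z \<in> ball 0 1" for z
  proof (cases "norm z \<le> 1/2")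
    case True
    then show ?thesis using M1 by force
  next
    case False
    have "(1/2) ^ n * norm (g z) \<le> norm z ^ n * norm (g z)"
      using False by (intro mult_right_mono power_mono) auto
    also have "\<dots> \<le> M" using bd[OF z] by (simp add: norm_mult norm_power)
    finally show ?thesis by (simp add: field_simps)
  qed
  then show ?thesis using that by blast
qed

lemma radial_limit_nonzero_AE:
  fixes F :: "complex \<Rightarrow> complex"
  assumes F: "F holomorphic_on ball 0 1" and bd: "\<And>z. z \<in> ball 0 1 \<Longrightarrow> norm (F z) \<le> M"
    and nz: "\<exists>z\<in>ball 0 1. F z \<noteq> 0"
  shows "AE t in circ. \<not> ((\<lambda>r. F (of_real r * cis t)) \<longlongrightarrow> 0) (at_left 1)"
proof -
  have "0 \<in> ball (0::complex) 1" by simp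
  then obtain n g where g: "g holomorphic_on ball 0 1" "g 0 \<noteq> 0"
    and Fg: "\<And>z. z \<in> ball 0 1 \<Longrightarrow> F z = z ^ n * g z"
    using holomorphic_factor_zero_global[OF F open_ball connected_ball _ nz] by (metis diff_zero)
  obtain M' where "\<And>z. z \<in> ball 0 1 \<Longrightarrow> norm (g z) \<le> M'"
    using bounded_if_power_mult_bounded[OF g(1), of n M] bd Fg by auto
  then have "AE t in circ. \<not> ((\<lambda>r. g (of_real r * cis t)) \<longlongrightarrow> 0) (at_left 1)"
    unfolding circ_def by (rule radial_limit_nonzero_AE_if_nonzero_at_0[OF g(1) _ g(2)])
  then show ?thesis
  proof (rule eventually_mono, intro notI)
    fix t
    assume g_lim: "\<not> ((\<lambda>r. g (of_real r * cis t)) \<longlongrightarrow> 0) (at_left 1)"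
      and F_lim: "((\<lambda>r. F (of_real r * cis t)) \<longlongrightarrow> 0) (at_left 1)"
    have "((\<lambda>r. (of_real r * cis t) ^ n) \<longlongrightarrow> (of_real 1 * cis t) ^ n) (at_left 1)"
      by (intro tendsto_intros)
    then have "((\<lambda>r. F (of_real r * cis t) / (of_real r * cis t) ^ n) \<longlongrightarrow> 0 / cis t ^ n) (at_left 1)"
      using tendsto_divide[OF F_lim] by simp
    moreover have "\<forall>\<^sub>F r in at_left 1. F (of_real r * cis t) / (of_real r * cis t) ^ n = g (of_real r * cis t)"
      using eventually_at_left_real[OF zero_less_one] by eventually_elim (auto simp: Fg norm_mult)
    ultimately have "((\<lambda>r. g (of_real r * cis t)) \<longlongrightarrow> 0) (at_left 1)"
      by (simp add: tendsto_cong)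
    then show False using g_lim by simp
  qed
qed

section \<open>The classes H-infinity and Nevanlinna\<close>

lemma circ_ae_not_bot: "ae_filter circ \<noteq> bot"
proof
  assume "ae_filter circ = bot"
  then have "emeasure circ (space circ) = 0" by (simp add: ae_filter_eq_bot_iff)
  moreover have "emeasure circ (space circ) = ennreal (2 * pi)"
    unfolding circ_def by (simp add: emeasure_restrict_space)
  ultimately show False by simp
qed

lemma HinfI:
  assumes "F holomorphic_on ball 0 1" "\<And>z. z \<in> ball 0 1 \<Longrightarrow> norm (F z) \<le> M"
    "AE t in circ. ((\<lambda>r. F (complex_of_real r * cis t)) \<longlongrightarrow> f t) (at_left 1)"
  shows "f \<in> Hinf"
  using assms unfolding Hinf_def bounded_iff by blast

lemma HinfE:
  assumes "f \<in> Hinf"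
  obtains F M where "F holomorphic_on ball 0 1" "\<And>z. z \<in> ball 0 1 \<Longrightarrow> norm (F z) \<le> M"
    "AE t in circ. ((\<lambda>r. F (complex_of_real r * cis t)) \<longlongrightarrow> f t) (at_left 1)"
  using assms unfolding Hinf_def bounded_iff by blast

lemma Hinf_const: "(\<lambda>t. c) \<in> Hinf"
  by (rule HinfI[where F="\<lambda>z. c" and M="norm c"]) auto

lemma Hinf_mult:
  assumes "f \<in> Hinf" "g \<in> Hinf" shows "(\<lambda>t. f t * g t) \<in> Hinf"
proof -
  obtain F M where F: "F holomorphic_on ball 0 1" "\<And>z. z \<in> ball 0 1 \<Longrightarrow> norm (F z) \<le> M"
    "AE t in circ. ((\<lambda>r. F (complex_of_real r * cis t)) \<longlongrightarrow> f t) (at_left 1)"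
    using HinfE[OF assms(1)] by blast
  obtain G N where G: "G holomorphic_on ball 0 1" "\<And>z. z \<in> ball 0 1 \<Longrightarrow> norm (G z) \<le> N"
    "AE t in circ. ((\<lambda>r. G (complex_of_real r * cis t)) \<longlongrightarrow> g t) (at_left 1)"
    using HinfE[OF assms(2)] by blast
  show ?thesis
  proof (rule HinfI[where F="\<lambda>z. F z * G z" and M="M * N"])
    show "(\<lambda>z. F z * G z) holomorphic_on ball 0 1" using F(1) G(1) by (intro holomorphic_intros)
    show "norm (F z * G z) \<le> M * N" if "z \<in> ball 0 1" for z
      using F(2)[OF that] G(2)[OF that] by (auto simp: norm_mult intro!: mult_mono order_trans[OF norm_ge_zero])
    show "AE t in circ. ((\<lambda>r. F (complex_of_real r * cis t) * G (complex_of_real r * cis t)) \<longlongrightarrow> f t * g t) (at_left 1)"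
      using F(3) G(3) by eventually_elim (rule tendsto_mult)
  qed
qed

lemma Hinf_add:
  assumes "f \<in> Hinf" "g \<in> Hinf" shows "(\<lambda>t. f t + g t) \<in> Hinf"
proof -
  obtain F M where F: "F holomorphic_on ball 0 1" "\<And>z. z \<in> ball 0 1 \<Longrightarrow> norm (F z) \<le> M"
    "AE t in circ. ((\<lambda>r. F (complex_of_real r * cis t)) \<longlongrightarrow> f t) (at_left 1)"
    using HinfE[OF assms(1)] by blast
  obtain G N where G: "G holomorphic_on ball 0 1" "\<And>z. z \<in> ball 0 1 \<Longrightarrow> norm (G z) \<le> N"
    "AE t in circ. ((\<lambda>r. G (complex_of_real r * cis t)) \<longlongrightarrow> g t) (at_left 1)"
    using HinfE[OF assms(2)] by blast
  show ?thesis
  proof (rule HinfI[where F="\<lambda>z. F z + G z" and M="M + N"])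
    show "(\<lambda>z. F z + G z) holomorphic_on ball 0 1" using F(1) G(1) by (intro holomorphic_intros)
    show "norm (F z + G z) \<le> M + N" if "z \<in> ball 0 1" for z
      using F(2)[OF that] G(2)[OF that] by (auto intro: order_trans[OF norm_triangle_ineq] add_mono)
    show "AE t in circ. ((\<lambda>r. F (complex_of_real r * cis t) + G (complex_of_real r * cis t)) \<longlongrightarrow> f t + g t) (at_left 1)"
      using F(3) G(3) by eventually_elim (rule tendsto_add)
  qed
qed

lemma Hinf_nonzero_AE:
  assumes f: "f \<in> Hinf" and nz: "\<not> (AE t in circ. f t = 0)"
  shows "AE t in circ. f t \<noteq> 0"
proof -
  obtain F M where F: "F holomorphic_on ball 0 1" "\<And>z. z \<in> ball 0 1 \<Longrightarrow> norm (F z) \<le> M"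
    and radial: "AE t in circ. ((\<lambda>r. F (complex_of_real r * cis t)) \<longlongrightarrow> f t) (at_left 1)"
    using HinfE[OF f] by blast
  show ?thesis
  proof (cases "\<exists>z\<in>ball 0 1. F z \<noteq> 0")
    case True
    then have "AE t in circ. \<not> ((\<lambda>r. F (of_real r * cis t)) \<longlongrightarrow> 0) (at_left 1)"
      using radial_limit_nonzero_AE F by blast
    with radial show ?thesis by eventually_elim auto
  next
    case False
    have vanish: "\<forall>\<^sub>F r in at_left 1. F (complex_of_real r * cis t) = 0" for t
      using eventually_at_left_real[OF zero_less_one]
      by eventually_elim (use False in \<open>auto simp: norm_mult\<close>)
    have "AE t in circ. f t = 0"
      using radial
      by eventually_elim (metis vanish tendsto_unique tendsto_eventually trivial_limit_at_left_real)
    then show ?thesis using nz by blast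
  qed
qed

lemma NevI:
  assumes "f \<in> Hinf" "g \<in> Hinf" "AE t in circ. g t \<noteq> 0" "AE t in circ. h t = f t / g t"
  shows "h \<in> Nev"
proof -
  have "\<not> (AE t in circ. g t = 0)"
  proof
    assume "AE t in circ. g t = 0"
    with assms(3) have "AE t in circ. False" by eventually_elim simp
    then show False using circ_ae_not_bot by (simp add: eventually_False)
  qed
  then show ?thesis using assms unfolding Nev_def by blast
qed

lemma NevE:
  assumes "h \<in> Nev"
  obtains f g where "f \<in> Hinf" "g \<in> Hinf" "AE t in circ. g t \<noteq> 0" "AE t in circ. h t = f t / g t"
  using assms Hinf_nonzero_AE unfolding Nev_def by blast

lemma Nev_cong:
  assumes "h \<in> Nev" "AE t in circ. h t = h' t" shows "h' \<in> Nev"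
proof -
  obtain f g where fg: "f \<in> Hinf" "g \<in> Hinf" "AE t in circ. g t \<noteq> 0" "AE t in circ. h t = f t / g t"
    using NevE[OF assms(1)] by blast
  have "AE t in circ. h' t = f t / g t" using fg(4) assms(2) by eventually_elim simp
  then show ?thesis using NevI[OF fg(1-3)] by blast
qed

lemma Nev_const: "(\<lambda>t. c) \<in> Nev"
  by (rule NevI[OF Hinf_const[of c] Hinf_const[of 1]]) auto

lemma Nev_mult:
  assumes "h1 \<in> Nev" "h2 \<in> Nev" shows "(\<lambda>t. h1 t * h2 t) \<in> Nev"
proof -
  obtain f1 g1 where 1: "f1 \<in> Hinf" "g1 \<in> Hinf" "AE t in circ. g1 t \<noteq> 0" "AE t in circ. h1 t = f1 t / g1 t"
    using NevE[OF assms(1)] by blast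
  obtain f2 g2 where 2: "f2 \<in> Hinf" "g2 \<in> Hinf" "AE t in circ. g2 t \<noteq> 0" "AE t in circ. h2 t = f2 t / g2 t"
    using NevE[OF assms(2)] by blast
  show ?thesis
  proof (rule NevI[OF Hinf_mult[OF 1(1) 2(1)] Hinf_mult[OF 1(2) 2(2)]])
    show "AE t in circ. g1 t * g2 t \<noteq> 0" using 1(3) 2(3) by eventually_elim simp
    show "AE t in circ. h1 t * h2 t = f1 t * f2 t / (g1 t * g2 t)" using 1(4) 2(4) by eventually_elim simp
  qed
qed

lemma Nev_add:
  assumes "h1 \<in> Nev" "h2 \<in> Nev" shows "(\<lambda>t. h1 t + h2 t) \<in> Nev"
proof -
  obtain f1 g1 where 1: "f1 \<in> Hinf" "g1 \<in> Hinf" "AE t in circ. g1 t \<noteq> 0" "AE t in circ. h1 t = f1 t / g1 t"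
    using NevE[OF assms(1)] by blast
  obtain f2 g2 where 2: "f2 \<in> Hinf" "g2 \<in> Hinf" "AE t in circ. g2 t \<noteq> 0" "AE t in circ. h2 t = f2 t / g2 t"
    using NevE[OF assms(2)] by blast
  show ?thesis
  proof (rule NevI[OF Hinf_add[OF Hinf_mult[OF 1(1) 2(2)] Hinf_mult[OF 2(1) 1(2)]] Hinf_mult[OF 1(2) 2(2)]])
    show "AE t in circ. g1 t * g2 t \<noteq> 0" using 1(3) 2(3) by eventually_elim simp
    show "AE t in circ. h1 t + h2 t = (f1 t * g2 t + f2 t * g1 t) / (g1 t * g2 t)"
      using 1(3,4) 2(3,4) by eventually_elim (simp add: field_simps)
  qed
qed

lemma Nev_nonzero_AE:
  assumes "h \<in> Nev" "\<not> (AE t in circ. h t = 0)" shows "AE t in circ. h t \<noteq> 0"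
proof -
  obtain f g where fg: "f \<in> Hinf" "g \<in> Hinf" "AE t in circ. g t \<noteq> 0" "AE t in circ. h t = f t / g t"
    using NevE[OF assms(1)] by blast
  have "\<not> (AE t in circ. f t = 0)"
  proof
    assume "AE t in circ. f t = 0"
    with fg(4) have "AE t in circ. h t = 0" by eventually_elim simp
    then show False using assms(2) by blast
  qed
  then have "AE t in circ. f t \<noteq> 0" by (rule Hinf_nonzero_AE[OF fg(1)])
  then show ?thesis using fg(3,4) by eventually_elim simp
qed

lemma Nev_inverse:
  assumes "h \<in> Nev" "\<not> (AE t in circ. h t = 0)" shows "(\<lambda>t. inverse (h t)) \<in> Nev"
proof -
  obtain f g where fg: "f \<in> Hinf" "g \<in> Hinf" "AE t in circ. g t \<noteq> 0" "AE t in circ. h t = f t / g t"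
    using NevE[OF assms(1)] by blast
  have "AE t in circ. f t \<noteq> 0"
    using Nev_nonzero_AE[OF assms] fg(4) by eventually_elim simp
  moreover have "AE t in circ. inverse (h t) = g t / f t"
    using fg(4) by eventually_elim simp
  ultimately show ?thesis by (rule NevI[OF fg(2,1)])
qed

lemma Nev_divide:
  assumes "h1 \<in> Nev" "h2 \<in> Nev" "\<not> (AE t in circ. h2 t = 0)" shows "(\<lambda>t. h1 t / h2 t) \<in> Nev"
  using Nev_mult[OF assms(1) Nev_inverse[OF assms(2,3)]] by (simp add: divide_inverse)

lemma Nev_sum:
  assumes "\<And>i. i \<in> S \<Longrightarrow> f i \<in> Nev" shows "(\<lambda>t. \<Sum>i\<in>S. f i t) \<in> Nev"
proof (cases "finite S")
  case True
  then show ?thesis using assms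
    by (induction S rule: finite_induct) (auto intro: Nev_const[of 0, simplified] Nev_add)
qed (simp add: Nev_const)

lemma Nev_prod:
  assumes "\<And>i. i \<in> S \<Longrightarrow> f i \<in> Nev" shows "(\<lambda>t. \<Prod>i\<in>S. f i t) \<in> Nev"
proof (cases "finite S")
  case True
  then show ?thesis using assms
    by (induction S rule: finite_induct) (auto intro: Nev_const[of 1, simplified] Nev_mult)
qed (simp add: Nev_const)

lemma Nev_det:
  fixes M :: "real \<Rightarrow> complex ^'n::finite ^'n"
  assumes "\<And>i j. (\<lambda>t. M t $ i $ j) \<in> Nev"
  shows "(\<lambda>t. det (M t)) \<in> Nev"
  unfolding det_def using assms by (intro Nev_sum Nev_mult Nev_const Nev_prod)

lemma Nev_vec_matrix_vector_mult:
  fixes X :: "real \<Rightarrow> complex ^'m::finite ^'l::finite"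
  assumes "\<And>i j. (\<lambda>t. X t $ i $ j) \<in> Nev" "v \<in> Nev_vec"
  shows "(\<lambda>t. X t *v v t) \<in> Nev_vec"
  using assms unfolding Nev_vec_def matrix_vector_mult_def by (auto intro!: Nev_sum Nev_mult)

section \<open>Independence modulo the Nevanlinna class\<close>

definition row_submatrix :: "'a ^ 'm ^ 'l \<Rightarrow> ('m \<Rightarrow> 'l) \<Rightarrow> 'a ^ 'm ^ 'm" where
  "row_submatrix M \<rho> = (\<chi> i. M $ \<rho> i)"

lemma row_submatrix_nth [simp]: "row_submatrix M \<rho> $ i = M $ \<rho> i"
  by (simp add: row_submatrix_def)

lemma row_submatrix_mult_vector:
  "(row_submatrix M \<rho> *v x) $ i = (M *v x) $ \<rho> i"
  by (simp add: row_submatrix_def matrix_vector_mult_def)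

lemma column_matrix_mult:
  fixes X :: "'a::comm_ring_1 ^ 'm::finite ^ 'l" and Y :: "'a ^ 'r ^ 'm"
  shows "column i (X ** Y) = X *v column i Y"
  by (simp add: vec_eq_iff matrix_vector_mult_def matrix_matrix_mult_def column_def)

lemma rank_ge_imp_nonzero_row_submatrix:
  fixes M :: "'a::field ^ 'm::finite ^ 'l::finite"
  assumes "CARD('m) \<le> rank M"
  obtains \<rho> where "det (row_submatrix M \<rho>) \<noteq> 0"
proof -
  obtain B where B: "B \<subseteq> rows M" "vec.independent B" "card B = vec.dim (rows M)"
    by (rule vec.basis_exists[of "rows M"])
  then obtain B' where B': "B' \<subseteq> B" "card B' = CARD('m)" "finite B'"
    using assms unfolding row_rank_def_gen by (metis obtain_subset_with_card_n)
  then have indep: "vec.independent B'" using vec.independent_mono[OF B(2)] by blast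
  obtain \<beta> where \<beta>: "bij_betw \<beta> (UNIV :: 'm set) B'"
    using finite_same_card_bij[of "UNIV :: 'm set" B'] B'(2,3) by auto
  have "\<beta> k \<in> rows M" for k
    using \<beta> B'(1) B(1) by (auto simp: bij_betw_def)
  then have "\<exists>i. row i M = \<beta> k" for k
    unfolding rows_def by (auto intro: sym)
  then obtain \<rho> where \<rho>: "\<And>k. row (\<rho> k) M = \<beta> k"
    by metis
  define S where "S = row_submatrix M \<rho>"
  have rowS: "row k S = \<beta> k" for k
    using \<rho>[of k] by (simp add: S_def row_submatrix_def row_def vec_eq_iff)
  have inj: "inj \<beta>" and img: "\<beta> ` UNIV = B'"
    using \<beta> by (auto simp: bij_betw_def)
  have "\<forall>k. c k = 0" if c: "(\<Sum>k\<in>UNIV. c k *s row k S) = 0" for c :: "'m \<Rightarrow> 'a"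
  proof
    fix k
    have "(\<Sum>v\<in>B'. c (inv \<beta> v) *s v) = (\<Sum>k\<in>UNIV. c k *s row k S)"
      unfolding img[symmetric] rowS by (simp add: sum.reindex[OF inj] inj)
    then have "\<forall>v\<in>B'. c (inv \<beta> v) = 0"
      using c indep B'(3) unfolding vec.independent_explicit by auto
    then show "c k = 0"
      using img inj by (metis inv_f_f rangeI)
  qed
  then have "invertible S"
    unfolding invertible_right_inverse matrix_right_invertible_independent_rows by blast
  then show ?thesis
    using that invertible_det_nz unfolding S_def by blast
qed

lemma Rank_eq_card_imp_nonzero_row_submatrix:
  fixes A :: "real \<Rightarrow> complex ^ 'm::finite ^ 'l::finite"
  assumes "Rank A = CARD('m)"
  obtains \<rho> where "\<not> (AE t in circ. det (row_submatrix (A t) \<rho>) = 0)"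
proof -
  have False if "\<forall>\<rho>. AE t in circ. det (row_submatrix (A t) \<rho>) = 0"
  proof -
  from that have "AE t in circ. \<forall>\<rho> \<in> UNIV. det (row_submatrix (A t) \<rho>) = 0"
    by (intro AE_finite_allI) auto
  then have "AE t in circ. rank (A t) \<le> CARD('m) - 1"
    by eventually_elim (metis rank_ge_imp_nonzero_row_submatrix UNIV_I Suc_pred' not_less_eq_eq zero_less_card_finite)
  then have "Rank A \<le> CARD('m) - 1"
    unfolding Rank_def by (rule Least_le)
  moreover have "0 < CARD('m)" by simp
  ultimately show False using assms by linarith
  qed
  then show ?thesis using that by blast
qed

lemma Nev_vec_matrix_vector_mult_iff:
  fixes A :: "real \<Rightarrow> complex ^ 'm::finite ^ 'l::finite"
  assumes A: "\<And>i j. (\<lambda>t. A t $ i $ j) \<in> Nev"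
    and minor: "\<not> (AE t in circ. det (row_submatrix (A t) \<rho>) = 0)"
  shows "(\<lambda>t. A t *v v t) \<in> Nev_vec \<longleftrightarrow> v \<in> Nev_vec"
proof
  assume Av: "(\<lambda>t. A t *v v t) \<in> Nev_vec"
  define d where "d = (\<lambda>t. det (row_submatrix (A t) \<rho>))"
  have "d \<in> Nev" unfolding d_def row_submatrix_def using A by (intro Nev_det) simp
  have d_nz: "\<not> (AE t in circ. d t = 0)" using minor by (simp add: d_def)
  have d_AE: "AE t in circ. d t \<noteq> 0" by (rule Nev_nonzero_AE[OF \<open>d \<in> Nev\<close> d_nz])
  show "v \<in> Nev_vec"
    unfolding Nev_vec_def mem_Collect_eq
  proof
    fix k :: 'm
    \<comment> \<open>By Cramer's rule, N / d is the k-th coordinate of v.\<close>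
    define N where "N = (\<lambda>t. det (\<chi> i j. if j = k then (A t *v v t) $ \<rho> i else A t $ \<rho> i $ j))"
    have N: "N \<in> Nev"
      unfolding N_def
    proof (intro Nev_det)
      show "(\<lambda>t. (\<chi> i j. if j = k then (A t *v v t) $ \<rho> i else A t $ \<rho> i $ j) $ i $ j) \<in> Nev" for i j
        using A Av by (cases "j = k") (simp_all add: Nev_vec_def)
    qed
    have N_eq: "N t = v t $ k * d t" for t
    proof -
      have "(\<chi> i j. if j = k then (A t *v v t) $ \<rho> i else A t $ \<rho> i $ j) =
          (\<chi> i j. if j = k then (row_submatrix (A t) \<rho> *v v t) $ i else row_submatrix (A t) \<rho> $ i $ j)"
        unfolding row_submatrix_mult_vector row_submatrix_nth ..
      then show ?thesis
        by (simp add: N_def d_def cramer_lemma)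
    qed
    have "AE t in circ. N t / d t = v t $ k"
      using d_AE by eventually_elim (simp add: N_eq)
    then show "(\<lambda>t. v t $ k) \<in> Nev"
      by (rule Nev_cong[OF Nev_divide[OF N \<open>d \<in> Nev\<close> d_nz]])
  qed
next
  assume "v \<in> Nev_vec"
  then show "(\<lambda>t. A t *v v t) \<in> Nev_vec" by (rule Nev_vec_matrix_vector_mult[OF A])
qed

lemma indep_mod_Nev_column_mult_iff:
  fixes A :: "real \<Rightarrow> complex ^ 'm::finite ^ 'l::finite"
    and \<Phi> :: "real \<Rightarrow> complex ^ 'r ^ 'm"
  assumes A: "\<And>i j. (\<lambda>t. A t $ i $ j) \<in> Nev"
    and minor: "\<not> (AE t in circ. det (row_submatrix (A t) \<rho>) = 0)"
  shows "indep_mod_Nev (\<lambda>k t. column k (A t ** \<Phi> t)) S \<longleftrightarrow> indep_mod_Nev (\<lambda>k t. column k (\<Phi> t)) S"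
proof -
  have "(\<Sum>i\<in>S. a i t *s column i (A t ** \<Phi> t)) = A t *v (\<Sum>i\<in>S. a i t *s column i (\<Phi> t))" for a t
    by (simp add: column_matrix_mult vec.sum vec.scale)
  then show ?thesis
    unfolding indep_mod_Nev_def by (simp add: Nev_vec_matrix_vector_mult_iff[OF A minor])
qed

theorem mainTheorem19:
  fixes A :: "real \<Rightarrow> complex ^ 'm::finite ^ 'l::finite"
    and \<Phi> :: "real \<Rightarrow> complex ^ 'r::finite ^ 'm"
  assumes "CARD('m) \<le> CARD('l)"
    and "\<forall>i j. (\<lambda>t. A t $ i $ j) \<in> Nev_inf"
    and "Rank A = CARD('m)"
    and "\<forall>i j. (\<lambda>t. \<Phi> t $ i $ j) \<in> L2"
  shows "ind_Nev (\<lambda>k t. column k (\<Phi> t)) = ind_Nev (\<lambda>k t. column k (A t ** \<Phi> t))"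
proof -
  have A: "\<And>i j. (\<lambda>t. A t $ i $ j) \<in> Nev"
    using assms(2) by (simp add: Nev_inf_def)
  obtain \<rho> where "\<not> (AE t in circ. det (row_submatrix (A t) \<rho>) = 0)"
    using Rank_eq_card_imp_nonzero_row_submatrix[OF assms(3)] .
  then have "indep_mod_Nev (\<lambda>k t. column k (A t ** \<Phi> t)) = indep_mod_Nev (\<lambda>k t. column k (\<Phi> t))"
    by (intro ext indep_mod_Nev_column_mult_iff[OF A])
  then show ?thesis
    unfolding ind_Nev_def by simp
qed

end
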